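(* Let $\hat k\ge 2$ be an integer and $n=\hat k^2$. Define $\tilde P:\mathbb{R}^n\to\mathbb{R}$ by $$\tilde P(c)=\sum_{i=1}^{n}\frac{e^{c_i}}{\sum_{v=1}^{n}e^{c_v}}\,c_i .$$ Then for all $c,c'\in\mathbb{R}^n$, $$|\tilde P(c)-\tilde P(c')|\le(\hat k^2-1)\max_{1\le i\le n}|c_i-c_i'| .$$
   Context: $\tilde P$ is the SoftPool operation applied to one $\hat k\times\hat k$ kernel region of a feature map, whose $\hat k^2$ entries are listed as the vector $c$: each entry is weighted by the softmax of the entries in the region and the weighted entries are summed. *)

theory Defs
  imports Complex_Main
begin

text \<open>SoftPool over a region of n entries c 0, ..., c (n-1) (0-based indexing of c_1..c_n).\<close>
definition softpool :: "nat \<Rightarrow> (nat \<Rightarrow> real) \<Rightarrow> real" where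
  "softpool n c = (\<Sum>i<n. exp (c i) / (\<Sum>v<n. exp (c v)) * c i)"

end

theory Submission
  imports Defs
begin

text \<open>Along the segment from c' to c, the derivative of SoftPool is the softmax-weighted mean of
  d j (1 + x j - P), where d = c - c' and P is the current SoftPool value. Its absolute value is at
  most max |d j| times the weighted mean of |1 + x j - P|. The positive parts of 1 + x j - P
  have weighted mean exactly 1; a negative part needs x j < P - 1 \<le> max x - 1, and there the
  weight is at most exp (x j - max x), so each contributes at most sup (u - 1) exp (-u) \<le> 1/4.
  Hence SoftPool is (1 + n/2)-Lipschitz for the maximum norm, and 1 + n/2 \<le> n - 1 once n \<ge> 4.\<close>

definition softmax :: "nat \<Rightarrow> (nat \<Rightarrow> real) \<Rightarrow> nat \<Rightarrow> real" where
  "softmax n x j = exp (x j) / (\<Sum>v<n. exp (x v))"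

lemma softmax_nonneg: "softmax n x j \<ge> 0"
  unfolding softmax_def by (simp add: sum_nonneg)

lemma sum_softmax:
  assumes "n > 0"
  shows "(\<Sum>j<n. softmax n x j) = 1"
proof -
  have "(\<Sum>v<n. exp (x v)) > 0" using assms by (intro sum_pos) auto
  then show ?thesis by (simp add: softmax_def sum_divide_distrib[symmetric])
qed

lemma softpool_eq_sum_softmax: "softpool n x = (\<Sum>j<n. softmax n x j * x j)"
  unfolding softpool_def softmax_def ..

lemma softpool_le_Max:
  assumes "n > 0"
  shows "softpool n x \<le> Max (x ` {..<n})"
proof -
  have "softpool n x \<le> (\<Sum>j<n. softmax n x j * Max (x ` {..<n}))"
    unfolding softpool_eq_sum_softmax
    by (intro sum_mono mult_left_mono softmax_nonneg Max_ge) auto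
  also have "\<dots> = Max (x ` {..<n})"
    using sum_softmax[OF assms] by (simp add: sum_distrib_right[symmetric])
  finally show ?thesis .
qed

lemma softmax_le_exp_diff_Max:
  assumes "j < n"
  shows "softmax n x j \<le> exp (x j - Max (x ` {..<n}))"
proof -
  have "Max (x ` {..<n}) \<in> x ` {..<n}" using assms by (intro Max_in) auto
  then obtain m where "m < n" "x m = Max (x ` {..<n})" by auto
  then have "exp (Max (x ` {..<n})) \<le> (\<Sum>v<n. exp (x v))"
    by (metis finite_lessThan lessThan_iff member_le_sum exp_ge_zero)
  then have "softmax n x j \<le> exp (x j) / exp (Max (x ` {..<n}))"
    unfolding softmax_def
    by (intro divide_left_mono mult_pos_pos) (auto intro: less_le_trans[OF exp_gt_zero])
  then show ?thesis by (simp add: exp_diff)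
qed

lemma exp_neg_mult_pos_part_le:
  fixes u :: real
  assumes "u \<ge> 0"
  shows "exp (-u) * max 0 (u - 1) \<le> 1/4"
proof -
  have "(u - 3)\<^sup>2 * (u + 15) / 27 \<ge> 0" using assms by simp
  then have "4 * (u - 1) \<le> (1 + u/3) ^ 3"
    by (simp add: field_simps power2_eq_square power3_eq_cube)
  also have "\<dots> \<le> exp (u/3) ^ 3"
    using assms by (intro power_mono) (auto simp: add.commute)
  also have "\<dots> = exp u" by (simp add: exp_of_nat_mult[symmetric])
  finally have "4 * max 0 (u - 1) \<le> exp u" by (simp add: max_def)
  then have "exp (-u) * (4 * max 0 (u - 1)) \<le> exp (-u) * exp u"
    by (intro mult_left_mono) auto
  then show ?thesis by (simp add: exp_minus field_simps)
qed

lemma softmax_weighted_abs_deviation_le: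
  assumes "n > 0"
  shows "(\<Sum>j<n. softmax n x j * \<bar>1 + x j - softpool n x\<bar>) \<le> 1 + real n / 2"
proof -
  define q where "q = softmax n x"
  define P where "P = softpool n x"
  define M where "M = Max (x ` {..<n})"
  have abs_split: "\<bar>1 + x j - P\<bar> = (1 + x j - P) + 2 * max 0 (P - x j - 1)" for j
    by (simp add: abs_if max_def)
  have positive_part: "(\<Sum>j<n. q j * (1 + x j - P)) = 1"
    using sum_softmax[OF assms, of x] softpool_eq_sum_softmax[of n x]
    by (simp add: q_def P_def algebra_simps sum.distrib sum_subtractf
        sum_distrib_left[symmetric] sum_distrib_right[symmetric])
  have negative_part: "q j * max 0 (P - x j - 1) \<le> 1/4" if "j < n" for j
  proof -
    have "q j * max 0 (P - x j - 1) \<le> q j * max 0 (M - x j - 1)"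
      using softpool_le_Max[OF assms, of x]
      by (intro mult_left_mono) (auto simp: q_def P_def M_def softmax_nonneg)
    also have "\<dots> \<le> exp (- (M - x j)) * max 0 (M - x j - 1)"
      using softmax_le_exp_diff_Max[OF that, of x] by (intro mult_right_mono) (auto simp: q_def M_def)
    also have "\<dots> \<le> 1/4"
      using that by (intro exp_neg_mult_pos_part_le) (auto simp: M_def)
    finally show ?thesis .
  qed
  have "(\<Sum>j<n. q j * \<bar>1 + x j - P\<bar>)
      = (\<Sum>j<n. q j * (1 + x j - P)) + 2 * (\<Sum>j<n. q j * max 0 (P - x j - 1))"
    by (simp add: abs_split sum_distrib_left sum.distrib[symmetric] algebra_simps)
  also have "\<dots> \<le> 1 + 2 * (\<Sum>j<n. 1/4)"
    unfolding positive_part by (intro add_left_mono mult_left_mono sum_mono negative_part) auto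
  also have "\<dots> = 1 + real n / 2" by simp
  finally show ?thesis unfolding q_def P_def .
qed

lemma softpool_segment_has_derivative:
  fixes a d :: "nat \<Rightarrow> real"
  defines "X \<equiv> \<lambda>t i. a i + t * d i"
  assumes "n > 0"
  shows "((\<lambda>t. softpool n (X t)) has_real_derivative
           (\<Sum>j<n. softmax n (X t) j * (d j * (1 + X t j - softpool n (X t))))) (at t)"
proof -
  define S where "S t = (\<Sum>v<n. exp (X t v))" for t
  define N where "N t = (\<Sum>v<n. exp (X t v) * X t v)" for t
  define S' where "S' t = (\<Sum>v<n. exp (X t v) * d v)" for t
  define N' where "N' t = (\<Sum>v<n. exp (X t v) * d v * X t v + exp (X t v) * d v)" for t
  have S_pos: "S t > 0" unfolding S_def using assms(2) by (intro sum_pos) auto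
  have softpool_eq: "softpool n (X t) = N t / S t" for t
    unfolding softpool_def N_def S_def by (simp add: sum_divide_distrib)
  have S_deriv: "(S has_real_derivative S' t) (at t)" unfolding S_def S'_def X_def
    by (rule DERIV_sum) (auto intro!: derivative_eq_intros)
  have N_deriv: "(N has_real_derivative N' t) (at t)" unfolding N_def N'_def X_def
    by (rule DERIV_sum) (auto intro!: derivative_eq_intros simp: algebra_simps)
  have "((\<lambda>t. N t / S t) has_real_derivative
                     N' t / S t - (N t / S t) * (S' t / S t)) (at t)"
    using DERIV_divide[OF N_deriv S_deriv] S_pos by (simp add: field_simps)
  moreover have "N' t / S t - (N t / S t) * (S' t / S t)
      = (\<Sum>j<n. softmax n (X t) j * (d j * (1 + X t j - N t / S t)))"
    unfolding N'_def S'_def softmax_def S_def[symmetric]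
    by (simp add: sum_divide_distrib sum_distrib_left sum_subtractf[symmetric] algebra_simps)
      (simp add: add_divide_distrib)
  ultimately show ?thesis unfolding softpool_eq by (simp only:)
qed

lemma softpool_lipschitz:
  assumes "n > 0" and bound: "\<And>i. i < n \<Longrightarrow> \<bar>c i - c' i\<bar> \<le> D"
  shows "\<bar>softpool n c - softpool n c'\<bar> \<le> (1 + real n / 2) * D"
proof -
  define d where "d i = c i - c' i" for i
  define X where "X t i = c' i + t * d i" for t :: real and i
  define f' where "f' t = (\<Sum>j<n. softmax n (X t) j * (d j * (1 + X t j - softpool n (X t))))" for t
  have "D \<ge> 0" using bound[of 0] assms(1) by linarith
  have f'_bound: "\<bar>f' t\<bar> \<le> (1 + real n / 2) * D" for t
  proof -
    have "\<bar>f' t\<bar> \<le> (\<Sum>j<n. \<bar>d j\<bar> * (softmax n (X t) j * \<bar>1 + X t j - softpool n (X t)\<bar>))"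
      unfolding f'_def
      by (rule order_trans[OF sum_abs]) (simp add: abs_mult softmax_nonneg mult.left_commute)
    also have "\<dots> \<le> (\<Sum>j<n. D * (softmax n (X t) j * \<bar>1 + X t j - softpool n (X t)\<bar>))"
      using bound by (intro sum_mono mult_right_mono) (auto simp: d_def softmax_nonneg)
    also have "\<dots> \<le> D * (1 + real n / 2)"
      unfolding sum_distrib_left[symmetric]
      using softmax_weighted_abs_deviation_le[OF assms(1)] \<open>D \<ge> 0\<close> by (intro mult_left_mono) auto
    finally show ?thesis by (simp add: mult.commute)
  qed
  obtain z where "softpool n (X 1) - softpool n (X 0) = (1 - 0) * f' z"
    using MVT2[of 0 1 "\<lambda>t. softpool n (X t)" f'] assms(1)
      softpool_segment_has_derivative[of n c' d] unfolding f'_def X_def by auto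
  moreover have "X 1 = c" "X 0 = c'" unfolding X_def d_def by auto
  ultimately show ?thesis using f'_bound[of z] by simp
qed

theorem mainTheorem4:
  fixes k :: nat and c c' :: "nat \<Rightarrow> real"
  assumes "k \<ge> 2"
  shows "\<bar>softpool (k^2) c - softpool (k^2) c'\<bar>
           \<le> (real (k^2) - 1) * (MAX i\<in>{..<k^2}. \<bar>c i - c' i\<bar>)"
proof -
  define D where "D = (MAX i\<in>{..<k^2}. \<bar>c i - c' i\<bar>)"
  have "k^2 \<ge> (2::nat)^2" using assms by (rule power_mono) simp
  then have "real (k^2) \<ge> real 4" by (intro of_nat_mono) simp
  then have n_ge_4: "real (k^2) \<ge> 4" by simp
  have bound: "\<bar>c i - c' i\<bar> \<le> D" if "i < k^2" for i
    unfolding D_def using that by (intro Max_ge) auto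
  have "D \<ge> 0" using bound[of 0] assms by (simp add: order_trans[OF abs_ge_zero])
  have "\<bar>softpool (k^2) c - softpool (k^2) c'\<bar> \<le> (1 + real (k^2) / 2) * D"
    using assms by (intro softpool_lipschitz bound) auto
  also have "\<dots> \<le> (real (k^2) - 1) * D"
    using n_ge_4 \<open>D \<ge> 0\<close> by (intro mult_right_mono) auto
  finally show ?thesis unfolding D_def .
qed

end
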